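(* Let $D_{\mathrm{jnt}}$ be any distribution of $(\mathsf X,\bar{\mathsf Y},\mathsf Y)$ on $\mathcal X\times\{0,1\}\times\{0,1\}$, let $c,\bar c\in[0,1]$ and $\lambda\in\mathbb R$. Define $s^*(x)=\eta(x)-c-\lambda\,(\eta_{\mathrm{DP}}(x)-\bar c)$ for $x\in\mathcal X$. Then the set of minimisers over measurable $f\colon\mathcal X\to[0,1]$ of $$R_{\mathrm{full}}(f)=\mathrm{CS}(f;D,c)-\lambda\,\mathrm{CS}(f;\bar D_{\mathrm{DP}},\bar c)$$ is exactly the set of $f^*$ such that, for $P_{\mathsf X}$-almost every $x$ with $s^*(x)\neq0$, $f^*(x)=\mathbf 1[s^*(x)>0]$.
   Context: $D$ is the law of $(\mathsf X,\mathsf Y)$ and $\bar D_{\mathrm{DP}}$ the law of $(\mathsf X,\bar{\mathsf Y})$ under $D_{\mathrm{jnt}}$; $P_{\mathsf X}$ is the marginal of $\mathsf X$. $\eta(x)=\Pr(\mathsf Y=1\mid\mathsf X=x)$, $\eta_{\mathrm{DP}}(x)=\Pr(\bar{\mathsf Y}=1\mid \mathsf X=x)$. A randomised classifier $f\colon\mathcal X\to[0,1]$ predicts $1$ on $x$ with probability $f(x)$. For a distribution $E$ of $(\mathsf X,\mathsf Z)$ on $\mathcal X\times\{0,1\}$ with $p=\Pr(\mathsf Z=1)$: $\mathrm{FNR}(f;E)=\mathbb E_{\mathsf X\mid \mathsf Z=1}[1-f(\mathsf X)]$, $\mathrm{FPR}(f;E)=\mathbb E_{\mathsf X\mid\mathsf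 Z=0}[f(\mathsf X)]$, and the cost-sensitive risk is $\mathrm{CS}(f;E,c)=p(1-c)\,\mathrm{FNR}(f;E)+(1-p)c\,\mathrm{FPR}(f;E)$. *)

theory Defs
  imports "HOL-Probability.Probability"
begin

text \<open>A distribution E of (X,Z) on X x {0,1} is a measure on S x bool
  (True encodes label 1).\<close>

definition pos_rate :: "('x \<times> bool) measure \<Rightarrow> real" where
  "pos_rate E = measure E {z \<in> space E. snd z}"

text \<open>FNR(f;E) = E_{X|Z=1}[1 - f X];  FPR(f;E) = E_{X|Z=0}[f X].
  (Conditional expectation as integral over the event divided by its probability;
   when the event is null this gives 0, and it is always multiplied by that probability in CS.)\<close>

definition FNR :: "('x \<Rightarrow> real) \<Rightarrow> ('x \<times> bool) measure \<Rightarrow> real" where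
  "FNR f E = (\<integral>z. (if snd z then 1 - f (fst z) else 0) \<partial>E) / pos_rate E"

definition FPR :: "('x \<Rightarrow> real) \<Rightarrow> ('x \<times> bool) measure \<Rightarrow> real" where
  "FPR f E = (\<integral>z. (if snd z then 0 else f (fst z)) \<partial>E) / (1 - pos_rate E)"

definition CS :: "('x \<Rightarrow> real) \<Rightarrow> ('x \<times> bool) measure \<Rightarrow> real \<Rightarrow> real" where
  "CS f E c = pos_rate E * (1 - c) * FNR f E + (1 - pos_rate E) * c * FPR f E"

definition law_D :: "'x measure \<Rightarrow> ('x \<times> bool \<times> bool) measure \<Rightarrow> ('x \<times> bool) measure" where
  "law_D S M = distr M (S \<Otimes>\<^sub>M count_space UNIV) (\<lambda>\<omega>. (fst \<omega>, snd (snd \<omega>)))"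

definition law_DP :: "'x measure \<Rightarrow> ('x \<times> bool \<times> bool) measure \<Rightarrow> ('x \<times> bool) measure" where
  "law_DP S M = distr M (S \<Otimes>\<^sub>M count_space UNIV) (\<lambda>\<omega>. (fst \<omega>, fst (snd \<omega>)))"

definition marg_X :: "'x measure \<Rightarrow> ('x \<times> bool \<times> bool) measure \<Rightarrow> 'x measure" where
  "marg_X S M = distr M S fst"

text \<open>eta is a (version of the) conditional probability Pr(Z = 1 | X = x) under E:
  a measurable [0,1]-valued function with int_A eta dP_X = Pr(X in A, Z = 1)
  for every measurable A.\<close>

definition is_cond_prob :: "'x measure \<Rightarrow> ('x \<times> bool) measure \<Rightarrow> ('x \<Rightarrow> real) \<Rightarrow> bool" where
  "is_cond_prob S E \<eta> \<longleftrightarrow>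
     \<eta> \<in> borel_measurable S \<and> (\<forall>x\<in>space S. 0 \<le> \<eta> x \<and> \<eta> x \<le> 1) \<and>
     (\<forall>A\<in>sets S. (\<integral>x\<in>A. \<eta> x \<partial>(distr E S fst)) = measure E (A \<times> {True}))"

end

theory Submission
  imports Defs
begin

text \<open>The defining property of \<open>\<eta>\<close> turns both error numerators into integrals against
  \<open>P\<^sub>X\<close>: the numerator of FNR is \<open>\<integral> \<eta> (1 - f)\<close> and that of FPR is \<open>\<integral> (1 - \<eta>) f\<close>.
  Hence \<open>CS(f;E,c) = (1 - c) \<integral> \<eta> - \<integral> f (\<eta> - c)\<close>, and since both laws share the marginal
  \<open>P\<^sub>X\<close>, \<open>R\<^sub>f\<^sub>u\<^sub>l\<^sub>l(f) = K - \<integral> f s\<^sup>*\<close> for a constant \<open>K\<close>. Minimising the risk thus means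
  maximising \<open>\<integral> f s\<^sup>*\<close> over \<open>[0,1]\<close>-valued \<open>f\<close>; as \<open>f s\<^sup>* \<le> \<one>[s\<^sup>* > 0] s\<^sup>*\<close> pointwise,
  the maximisers are exactly the \<open>f\<close> agreeing a.e. with \<open>\<one>[s\<^sup>* > 0]\<close> off \<open>{s\<^sup>* = 0}\<close>.\<close>

lemma law_of_label:
  fixes M :: "('x \<times> bool \<times> bool) measure" and L :: "bool \<times> bool \<Rightarrow> bool"
  assumes M: "prob_space M"
    and sets_M: "sets M = sets (S \<Otimes>\<^sub>M (count_space UNIV \<Otimes>\<^sub>M count_space UNIV))"
  shows "prob_space (distr M (S \<Otimes>\<^sub>M count_space UNIV) (\<lambda>\<omega>. (fst \<omega>, L (snd \<omega>))))"
    and "sets (distr M (S \<Otimes>\<^sub>M count_space UNIV) (\<lambda>\<omega>. (fst \<omega>, L (snd \<omega>))))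
           = sets (S \<Otimes>\<^sub>M count_space UNIV)"
    and "distr (distr M (S \<Otimes>\<^sub>M count_space UNIV) (\<lambda>\<omega>. (fst \<omega>, L (snd \<omega>)))) S fst = marg_X S M"
proof -
  have "L \<in> count_space UNIV \<Otimes>\<^sub>M count_space UNIV \<rightarrow>\<^sub>M count_space UNIV"
    by (simp add: pair_measure_countable)
  then have "(\<lambda>\<omega>. (fst \<omega>, L (snd \<omega>))) \<in> M \<rightarrow>\<^sub>M S \<Otimes>\<^sub>M count_space UNIV"
    unfolding measurable_cong_sets[OF sets_M refl]
    by (intro measurable_Pair measurable_compose[OF measurable_snd]) simp_all
  then show "prob_space (distr M (S \<Otimes>\<^sub>M count_space UNIV) (\<lambda>\<omega>. (fst \<omega>, L (snd \<omega>))))"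
    and "distr (distr M (S \<Otimes>\<^sub>M count_space UNIV) (\<lambda>\<omega>. (fst \<omega>, L (snd \<omega>)))) S fst = marg_X S M"
    by (simp_all add: prob_space.prob_space_distr[OF M] distr_distr comp_def marg_X_def)
qed simp

lemma prob_space_distr_fst:
  assumes "prob_space E" and "sets E = sets (S \<Otimes>\<^sub>M T)"
  shows "prob_space (distr E S fst)"
  using measurable_cong_sets[OF assms(2) refl] measurable_fst
  by (blast intro: prob_space.prob_space_distr[OF assms(1)])

lemma integrable_cond_prob:
  assumes E: "finite_measure E" and sets_E: "sets E = sets (S \<Otimes>\<^sub>M count_space UNIV)"
    and cp: "is_cond_prob S E \<eta>"
  shows "integrable (distr E S fst) \<eta>"
proof -
  interpret P: finite_measure "distr E S fst"
    using measurable_cong_sets[OF sets_E refl] measurable_fst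
    by (blast intro: finite_measure.finite_measure_distr[OF E])
  show ?thesis
    using cp unfolding is_cond_prob_def by (auto intro!: P.integrable_const_bound[where B=1] AE_I2)
qed

lemma integral_label_eq_cond_prob:
  fixes E :: "('x \<times> bool) measure" and \<eta> h :: "'x \<Rightarrow> real"
  assumes E: "finite_measure E" and sets_E: "sets E = sets (S \<Otimes>\<^sub>M count_space UNIV)"
    and cp: "is_cond_prob S E \<eta>" and h: "h \<in> borel_measurable S"
  shows "(\<integral>z. (if snd z then h (fst z) else 0) \<partial>E) = (\<integral>x. \<eta> x * h x \<partial>distr E S fst)"
proof -
  interpret E: finite_measure E by fact
  let ?P = "distr E S fst"
  let ?label = "\<lambda>z::'x \<times> bool. if snd z then 1 else (0::real)"
  have space_E: "space E = space S \<times> UNIV"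
    using sets_eq_imp_space_eq[OF sets_E] by (simp add: space_pair_measure)
  have fst_meas: "fst \<in> E \<rightarrow>\<^sub>M S"
    using measurable_cong_sets[OF sets_E refl] measurable_fst by blast
  have "snd \<in> E \<rightarrow>\<^sub>M (count_space UNIV :: bool measure)"
    using measurable_cong_sets[OF sets_E refl] measurable_snd by blast
  then have label_meas: "?label \<in> borel_measurable E"
    by (rule measurable_compose) simp
  have \<eta>_meas: "\<eta> \<in> borel_measurable S" and \<eta>_bounds: "\<forall>x\<in>space S. 0 \<le> \<eta> x \<and> \<eta> x \<le> 1"
    and \<eta>_integral: "\<forall>A\<in>sets S. (\<integral>x\<in>A. \<eta> x \<partial>?P) = measure E (A \<times> {True})"
    using cp unfolding is_cond_prob_def by auto
  interpret P: finite_measure ?P by (simp add: E.finite_measure_distr fst_meas)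
  have density_eq: "distr (density E ?label) S fst = density ?P \<eta>"
  proof (rule measure_eqI)
    fix A assume "A \<in> sets (distr (density E ?label) S fst)"
    hence A: "A \<in> sets S" by simp
    have "emeasure (distr (density E ?label) S fst) A = (\<integral>\<^sup>+ z. indicator (A \<times> {True}) z \<partial>E)"
      using A fst_meas label_meas
      by (simp add: emeasure_distr emeasure_density)
         (intro nn_integral_cong, auto simp: space_E indicator_def)
    also have "\<dots> = ennreal (\<integral>x. \<eta> x * indicator A x \<partial>?P)"
      using A sets_E \<eta>_integral by (simp add: E.emeasure_eq_measure set_lebesgue_integral_def mult.commute)
    also have "\<dots> = (\<integral>\<^sup>+ x. ennreal (\<eta> x) * indicator A x \<partial>?P)"
      using A \<eta>_meas \<eta>_bounds
      by (subst nn_integral_eq_integral[symmetric])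
         (auto intro!: P.integrable_const_bound[where B=1] AE_I2 nn_integral_cong simp: indicator_def)
    also have "\<dots> = emeasure (density ?P \<eta>) A"
      using A \<eta>_meas by (simp add: emeasure_density)
    finally show "emeasure (distr (density E ?label) S fst) A = emeasure (density ?P \<eta>) A" .
  qed simp
  have "(\<integral>z. (if snd z then h (fst z) else 0) \<partial>E) = (\<integral>z. ?label z *\<^sub>R h (fst z) \<partial>E)"
    by (intro Bochner_Integration.integral_cong) auto
  also have "\<dots> = (\<integral>x. h x \<partial>distr (density E ?label) S fst)"
    using h fst_meas label_meas by (simp add: integral_density integral_distr)
  also have "\<dots> = (\<integral>x. \<eta> x * h x \<partial>?P)"
    using h \<eta>_meas \<eta>_bounds by (subst density_eq, subst integral_density) auto
  finally show ?thesis .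
qed

lemma integral_unlabel_eq_cond_prob:
  fixes E :: "('x \<times> bool) measure" and \<eta> h :: "'x \<Rightarrow> real"
  assumes E: "finite_measure E" and sets_E: "sets E = sets (S \<Otimes>\<^sub>M count_space UNIV)"
    and cp: "is_cond_prob S E \<eta>"
    and h: "h \<in> borel_measurable S" and h_bound: "\<forall>x\<in>space S. \<bar>h x\<bar> \<le> B"
  shows "(\<integral>z. (if snd z then 0 else h (fst z)) \<partial>E) = (\<integral>x. (1 - \<eta> x) * h x \<partial>distr E S fst)"
proof -
  interpret E: finite_measure E by fact
  let ?P = "distr E S fst"
  have space_E: "space E = space S \<times> UNIV"
    using sets_eq_imp_space_eq[OF sets_E] by (simp add: space_pair_measure)
  have fst_meas: "fst \<in> E \<rightarrow>\<^sub>M S"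
    using measurable_cong_sets[OF sets_E refl] measurable_fst by blast
  have snd_meas: "snd \<in> E \<rightarrow>\<^sub>M (count_space UNIV :: bool measure)"
    using measurable_cong_sets[OF sets_E refl] measurable_snd by blast
  have \<eta>_meas: "\<eta> \<in> borel_measurable S" and \<eta>_bounds: "\<forall>x\<in>space S. 0 \<le> \<eta> x \<and> \<eta> x \<le> 1"
    using cp unfolding is_cond_prob_def by auto
  interpret P: finite_measure ?P by (simp add: E.finite_measure_distr fst_meas)
  have "0 \<le> B" if "x \<in> space S" for x
    using h_bound that abs_ge_zero order_trans by blast
  then have integrable: "integrable E (\<lambda>z. h (fst z))" "integrable E (\<lambda>z. if snd z then h (fst z) else 0)"
    using h h_bound fst_meas snd_meas space_E
    by (auto intro!: E.integrable_const_bound[where B=B] AE_I2)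
  have "(\<integral>z. (if snd z then 0 else h (fst z)) \<partial>E)
      = (\<integral>z. h (fst z) - (if snd z then h (fst z) else 0) \<partial>E)"
    by (intro Bochner_Integration.integral_cong) auto
  also have "\<dots> = (\<integral>z. h (fst z) \<partial>E) - (\<integral>z. (if snd z then h (fst z) else 0) \<partial>E)"
    using integrable by (rule Bochner_Integration.integral_diff)
  also have "\<dots> = (\<integral>x. h x \<partial>?P) - (\<integral>x. \<eta> x * h x \<partial>?P)"
    using integral_label_eq_cond_prob[OF E sets_E cp h] h fst_meas by (simp add: integral_distr)
  also have "\<dots> = (\<integral>x. (1 - \<eta> x) * h x \<partial>?P)"
  proof -
    have "\<bar>\<eta> x * h x\<bar> \<le> B" if "x \<in> space S" for x
      using mult_mono[of "\<bar>\<eta> x\<bar>" 1 "\<bar>h x\<bar>" B] that h_bound \<eta>_bounds by (simp add: abs_mult)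
    then have "integrable ?P h" "integrable ?P (\<lambda>x. \<eta> x * h x)"
      using h h_bound \<eta>_meas by (auto intro!: P.integrable_const_bound[where B=B] AE_I2)
    then show ?thesis by (simp add: left_diff_distrib)
  qed
  finally show ?thesis .
qed

lemma pos_rate_eq_cond_prob:
  assumes sets_E: "sets E = sets (S \<Otimes>\<^sub>M count_space UNIV)" and cp: "is_cond_prob S E \<eta>"
  shows "pos_rate E = (\<integral>x. \<eta> x \<partial>distr E S fst)"
proof -
  have "space E = space S \<times> UNIV"
    using sets_eq_imp_space_eq[OF sets_E] by (simp add: space_pair_measure)
  then have "{z \<in> space E. snd z} = space S \<times> {True}" by auto
  then have "pos_rate E = measure E (space S \<times> {True})"
    unfolding pos_rate_def by simp
  also have "\<dots> = (\<integral>x\<in>space S. \<eta> x \<partial>distr E S fst)"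
    using cp unfolding is_cond_prob_def by simp
  also have "\<dots> = (\<integral>x. \<eta> x \<partial>distr E S fst)"
    unfolding set_lebesgue_integral_def by (intro Bochner_Integration.integral_cong) auto
  finally show ?thesis .
qed

lemma CS_eq_cond_prob:
  fixes E :: "('x \<times> bool) measure" and \<eta> f :: "'x \<Rightarrow> real"
  assumes E: "prob_space E" and sets_E: "sets E = sets (S \<Otimes>\<^sub>M count_space UNIV)"
    and cp: "is_cond_prob S E \<eta>"
    and f: "f \<in> borel_measurable S" and f_bounds: "\<forall>x\<in>space S. 0 \<le> f x \<and> f x \<le> 1"
  shows "CS f E c = (1 - c) * (\<integral>x. \<eta> x * (1 - f x) \<partial>distr E S fst)
                    + c * (\<integral>x. (1 - \<eta> x) * f x \<partial>distr E S fst)"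
proof -
  interpret E: prob_space E by fact
  let ?P = "distr E S fst"
  interpret P: prob_space ?P
    using E sets_E by (rule prob_space_distr_fst)
  have \<eta>_meas: "\<eta> \<in> borel_measurable S" and \<eta>_bounds: "\<forall>x\<in>space S. 0 \<le> \<eta> x \<and> \<eta> x \<le> 1"
    using cp unfolding is_cond_prob_def by auto
  have integrable: "integrable ?P u"
    if "u \<in> borel_measurable S" "\<forall>x\<in>space S. 0 \<le> u x \<and> u x \<le> 1" for u :: "'x \<Rightarrow> real"
    using that by (auto intro!: P.integrable_const_bound[where B=1] AE_I2)
  define p where "p = pos_rate E"
  define I where "I = (\<integral>z. (if snd z then 1 - f (fst z) else 0) \<partial>E)"
  define J where "J = (\<integral>z. (if snd z then 0 else f (fst z)) \<partial>E)"
  have p: "p = (\<integral>x. \<eta> x \<partial>?P)"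
    unfolding p_def using sets_E cp by (rule pos_rate_eq_cond_prob)
  have I: "I = (\<integral>x. \<eta> x * (1 - f x) \<partial>?P)"
    unfolding I_def using E.finite_measure_axioms sets_E cp by (rule integral_label_eq_cond_prob) (use f in simp)
  have J: "J = (\<integral>x. (1 - \<eta> x) * f x \<partial>?P)"
    unfolding J_def using E.finite_measure_axioms sets_E cp f
    by (rule integral_unlabel_eq_cond_prob[where B=1]) (use f_bounds in simp)
  have \<eta>_integrable: "integrable ?P \<eta>"
    using E.finite_measure_axioms sets_E cp by (rule integrable_cond_prob)
  have "I \<le> p"
    unfolding I p using f f_bounds \<eta>_meas \<eta>_bounds
    by (intro integral_mono integrable \<eta>_integrable) (auto intro: mult_le_one simp: mult_left_le)
  moreover have "J \<le> 1 - p"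
  proof -
    have "J \<le> (\<integral>x. 1 - \<eta> x \<partial>?P)"
      unfolding J using f f_bounds \<eta>_meas \<eta>_bounds
      by (intro integral_mono integrable) (auto intro: mult_le_one simp: mult_right_le_one_le)
    also have "\<dots> = 1 - p"
      using \<eta>_integrable P.prob_space by (simp add: p Bochner_Integration.integral_diff)
    finally show ?thesis .
  qed
  moreover have "0 \<le> I" "0 \<le> J"
    unfolding I J using f_bounds \<eta>_bounds by (auto intro!: integral_nonneg_AE AE_I2)
  \<comment> \<open>so the junk value of \<open>FNR\<close> at \<open>p = 0\<close> and of \<open>FPR\<close> at \<open>p = 1\<close> is harmless\<close>
  ultimately have "p * (I / p) = I" "(1 - p) * (J / (1 - p)) = J"
    by (cases "p = 0"; cases "1 - p = 0"; simp)+
  moreover have "CS f E c = (1 - c) * (p * (I / p)) + c * ((1 - p) * (J / (1 - p)))"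
    unfolding CS_def FNR_def FPR_def I_def[symmetric] J_def[symmetric] p_def[symmetric]
    by (simp only: mult.assoc mult.commute mult.left_commute)
  ultimately show ?thesis
    unfolding I J by simp
qed

lemma CS_eq_affine:
  fixes E :: "('x \<times> bool) measure" and \<eta> f :: "'x \<Rightarrow> real"
  assumes E: "prob_space E" and sets_E: "sets E = sets (S \<Otimes>\<^sub>M count_space UNIV)"
    and cp: "is_cond_prob S E \<eta>"
    and f: "f \<in> borel_measurable S" and f_bounds: "\<forall>x\<in>space S. 0 \<le> f x \<and> f x \<le> 1"
  shows "CS f E c = (1 - c) * (\<integral>x. \<eta> x \<partial>distr E S fst) - (\<integral>x. f x * (\<eta> x - c) \<partial>distr E S fst)"
proof -
  let ?P = "distr E S fst"
  interpret P: prob_space ?P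
    using E sets_E by (rule prob_space_distr_fst)
  have \<eta>_meas: "\<eta> \<in> borel_measurable S" and \<eta>_bounds: "\<forall>x\<in>space S. 0 \<le> \<eta> x \<and> \<eta> x \<le> 1"
    using cp unfolding is_cond_prob_def by auto
  have "integrable ?P \<eta>" "integrable ?P f" "integrable ?P (\<lambda>x. \<eta> x * f x)"
    using f f_bounds \<eta>_meas \<eta>_bounds
    by (auto intro!: P.integrable_const_bound[where B=1] AE_I2 mult_le_one simp: abs_mult)
  then have linear:
      "(\<integral>x. \<eta> x * (1 - f x) \<partial>?P) = (\<integral>x. \<eta> x \<partial>?P) - (\<integral>x. \<eta> x * f x \<partial>?P)"
    "(\<integral>x. (1 - \<eta> x) * f x \<partial>?P) = (\<integral>x. f x \<partial>?P) - (\<integral>x. \<eta> x * f x \<partial>?P)"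
    "(\<integral>x. f x * (\<eta> x - c) \<partial>?P) = (\<integral>x. \<eta> x * f x \<partial>?P) - c * (\<integral>x. f x \<partial>?P)"
    by (simp_all add: algebra_simps)
  show ?thesis
    unfolding CS_eq_cond_prob[OF assms] linear by (simp add: algebra_simps)
qed

lemma CS_difference_eq:
  fixes E E' :: "('x \<times> bool) measure" and \<eta> \<eta>' f :: "'x \<Rightarrow> real"
  assumes E: "prob_space E" "sets E = sets (S \<Otimes>\<^sub>M count_space UNIV)" "is_cond_prob S E \<eta>"
    and E': "prob_space E'" "sets E' = sets (S \<Otimes>\<^sub>M count_space UNIV)" "is_cond_prob S E' \<eta>'"
    and marginals: "distr E S fst = P" "distr E' S fst = P"
    and f: "f \<in> borel_measurable S" "\<forall>x\<in>space S. 0 \<le> f x \<and> f x \<le> 1"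
    and c: "c \<in> {0..1}" and c': "c' \<in> {0..1}"
  shows "CS f E c - lam * CS f E' c'
    = (1 - c) * (\<integral>x. \<eta> x \<partial>P) - lam * ((1 - c') * (\<integral>x. \<eta>' x \<partial>P))
      - (\<integral>x. f x * (\<eta> x - c - lam * (\<eta>' x - c')) \<partial>P)"
proof -
  interpret P: prob_space P
    using prob_space_distr_fst[OF E(1,2)] marginals(1) by simp
  have sets_P: "sets P = sets S"
    using marginals(1) by auto
  have "\<bar>f x * (\<eta> x - c)\<bar> \<le> 1" "\<bar>f x * (\<eta>' x - c')\<bar> \<le> 1" if "x \<in> space S" for x
  proof -
    have "0 \<le> \<eta> x" "\<eta> x \<le> 1" "0 \<le> \<eta>' x" "\<eta>' x \<le> 1" "0 \<le> f x" "f x \<le> 1"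
      using E(3) E'(3) f(2) that unfolding is_cond_prob_def by auto
    then show "\<bar>f x * (\<eta> x - c)\<bar> \<le> 1" "\<bar>f x * (\<eta>' x - c')\<bar> \<le> 1"
      using c c' by (auto simp: abs_mult intro!: mult_le_one)
  qed
  moreover have "space P = space S" "borel_measurable P = borel_measurable S"
    using sets_eq_imp_space_eq[OF sets_P] measurable_cong_sets[OF sets_P refl] by simp_all
  ultimately have "integrable P (\<lambda>x. f x * (\<eta> x - c))" "integrable P (\<lambda>x. f x * (\<eta>' x - c'))"
    using E(3) E'(3) f unfolding is_cond_prob_def
    by (auto intro!: P.integrable_const_bound[where B=1] AE_I2)
  then have "(\<integral>x. f x * (\<eta> x - c) - lam * (f x * (\<eta>' x - c')) \<partial>P)
      = (\<integral>x. f x * (\<eta> x - c) \<partial>P) - lam * (\<integral>x. f x * (\<eta>' x - c') \<partial>P)"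
    by simp
  moreover have "(\<integral>x. f x * (\<eta> x - c - lam * (\<eta>' x - c')) \<partial>P)
      = (\<integral>x. f x * (\<eta> x - c) - lam * (f x * (\<eta>' x - c')) \<partial>P)"
    by (simp add: algebra_simps)
  ultimately have split:
    "(\<integral>x. f x * (\<eta> x - c - lam * (\<eta>' x - c')) \<partial>P)
      = (\<integral>x. f x * (\<eta> x - c) \<partial>P) - lam * (\<integral>x. f x * (\<eta>' x - c') \<partial>P)"
    by simp
  show ?thesis
    unfolding CS_eq_affine[OF E f] CS_eq_affine[OF E' f] marginals split
    by (simp add: algebra_simps)
qed

lemma integral_mult_maximal_iff:
  fixes P :: "'a measure" and s f :: "'a \<Rightarrow> real"
  assumes s: "integrable P s"
    and f: "f \<in> borel_measurable P" and f_bounds: "\<forall>x\<in>space P. 0 \<le> f x \<and> f x \<le> 1"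
  shows "(\<forall>g. g \<in> borel_measurable P \<and> (\<forall>x\<in>space P. 0 \<le> g x \<and> g x \<le> 1) \<longrightarrow>
            (\<integral>x. g x * s x \<partial>P) \<le> (\<integral>x. f x * s x \<partial>P))
    \<longleftrightarrow> (AE x in P. s x \<noteq> 0 \<longrightarrow> f x = (if s x > 0 then 1 else 0))"
proof -
  define \<theta> where "\<theta> x = (if s x > 0 then 1 else (0::real))" for x
  have integrable: "integrable P (\<lambda>x. g x * s x)"
    if "g \<in> borel_measurable P" "\<forall>x\<in>space P. 0 \<le> g x \<and> g x \<le> 1" for g :: "'a \<Rightarrow> real"
    using that borel_measurable_integrable[OF s]
    by (intro Bochner_Integration.integrable_bound[OF s])
       (auto intro!: AE_I2 mult_left_le_one_le simp: abs_mult)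
  have \<theta>_meas: "\<theta> \<in> borel_measurable P"
    using borel_measurable_integrable[OF s] unfolding \<theta>_def by measurable
  have \<theta>_bounds: "\<forall>x\<in>space P. 0 \<le> \<theta> x \<and> \<theta> x \<le> 1"
    by (simp add: \<theta>_def)
  have \<theta>_pointwise_max: "g x * s x \<le> \<theta> x * s x" if "0 \<le> g x" "g x \<le> 1" for g :: "'a \<Rightarrow> real" and x
    using that by (auto simp: \<theta>_def mult_le_cancel_right1 intro: mult_nonneg_nonpos)
  have \<theta>_maximal: "(\<integral>x. g x * s x \<partial>P) \<le> (\<integral>x. \<theta> x * s x \<partial>P)"
    if "g \<in> borel_measurable P" "\<forall>x\<in>space P. 0 \<le> g x \<and> g x \<le> 1" for g
    using that \<theta>_meas \<theta>_bounds \<theta>_pointwise_max by (intro integral_mono integrable) auto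
  show ?thesis
  proof
    assume "\<forall>g. g \<in> borel_measurable P \<and> (\<forall>x\<in>space P. 0 \<le> g x \<and> g x \<le> 1) \<longrightarrow>
              (\<integral>x. g x * s x \<partial>P) \<le> (\<integral>x. f x * s x \<partial>P)"
    then have "(\<integral>x. \<theta> x * s x \<partial>P) \<le> (\<integral>x. f x * s x \<partial>P)"
      using \<theta>_meas \<theta>_bounds by blast
    with \<theta>_maximal[OF f f_bounds] have "(\<integral>x. \<theta> x * s x - f x * s x \<partial>P) = 0"
      using integrable[OF f f_bounds] integrable[OF \<theta>_meas \<theta>_bounds] by simp
    then have "AE x in P. \<theta> x * s x - f x * s x = 0"
      using integrable[OF f f_bounds] integrable[OF \<theta>_meas \<theta>_bounds] f_bounds \<theta>_pointwise_max
      by (subst integral_nonneg_eq_0_iff_AE[symmetric]) (auto intro!: AE_I2)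
    then show "AE x in P. s x \<noteq> 0 \<longrightarrow> f x = (if s x > 0 then 1 else 0)"
      by eventually_elim (auto simp: \<theta>_def)
  next
    assume "AE x in P. s x \<noteq> 0 \<longrightarrow> f x = (if s x > 0 then 1 else 0)"
    then have "AE x in P. f x * s x = \<theta> x * s x"
      by eventually_elim (auto simp: \<theta>_def)
    then have "(\<integral>x. f x * s x \<partial>P) = (\<integral>x. \<theta> x * s x \<partial>P)"
      by (rule integral_cong_AE[rotated 2]) (use f \<theta>_meas borel_measurable_integrable[OF s] in simp_all)
    then show "\<forall>g. g \<in> borel_measurable P \<and> (\<forall>x\<in>space P. 0 \<le> g x \<and> g x \<le> 1) \<longrightarrow>
                 (\<integral>x. g x * s x \<partial>P) \<le> (\<integral>x. f x * s x \<partial>P)"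
      using \<theta>_maximal by auto
  qed
qed

theorem proposition1:
  fixes S :: "'x measure" and M :: "('x \<times> bool \<times> bool) measure"
    and \<eta> \<eta>DP :: "'x \<Rightarrow> real" and c cbar lam :: real
  assumes "prob_space M"
    and "sets M = sets (S \<Otimes>\<^sub>M (count_space UNIV \<Otimes>\<^sub>M count_space UNIV))"
    and "c \<in> {0..1}" and "cbar \<in> {0..1}"
    and "is_cond_prob S (law_D S M) \<eta>"
    and "is_cond_prob S (law_DP S M) \<eta>DP"
  shows "{f. f \<in> borel_measurable S \<and> (\<forall>x\<in>space S. 0 \<le> f x \<and> f x \<le> 1) \<and>
            (\<forall>g. g \<in> borel_measurable S \<and> (\<forall>x\<in>space S. 0 \<le> g x \<and> g x \<le> 1) \<longrightarrow>
               CS f (law_D S M) c - lam * CS f (law_DP S M) cbar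
                 \<le> CS g (law_D S M) c - lam * CS g (law_DP S M) cbar)}
       = {f. f \<in> borel_measurable S \<and> (\<forall>x\<in>space S. 0 \<le> f x \<and> f x \<le> 1) \<and>
            (AE x in marg_X S M.
               \<eta> x - c - lam * (\<eta>DP x - cbar) \<noteq> 0 \<longrightarrow>
               f x = (if \<eta> x - c - lam * (\<eta>DP x - cbar) > 0 then 1 else 0))}"
proof -
  let ?P = "marg_X S M"
  define s where "s x = \<eta> x - c - lam * (\<eta>DP x - cbar)" for x
  note D = law_of_label[OF assms(1,2), of snd, folded law_D_def]
  note DP = law_of_label[OF assms(1,2), of fst, folded law_DP_def]
  interpret P: prob_space ?P
    using prob_space_distr_fst[OF D(1,2)] D(3) by simp
  define K where "K = (1 - c) * (\<integral>x. \<eta> x \<partial>?P) - lam * ((1 - cbar) * (\<integral>x. \<eta>DP x \<partial>?P))"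
  have risk: "CS f (law_D S M) c - lam * CS f (law_DP S M) cbar = K - (\<integral>x. f x * s x \<partial>?P)"
    if "f \<in> borel_measurable S" "\<forall>x\<in>space S. 0 \<le> f x \<and> f x \<le> 1" for f
    unfolding K_def s_def
    by (rule CS_difference_eq[OF D(1,2) assms(5) DP(1,2) assms(6) D(3) DP(3) that assms(3,4)])
  have "integrable ?P \<eta>" "integrable ?P \<eta>DP"
    using integrable_cond_prob[OF prob_space.finite_measure[OF D(1)] D(2) assms(5)]
      integrable_cond_prob[OF prob_space.finite_measure[OF DP(1)] DP(2) assms(6)] D(3) DP(3)
    by simp_all
  then have "integrable ?P s"
    unfolding s_def by simp
  from integral_mult_maximal_iff[OF this]
  have "(\<forall>g. g \<in> borel_measurable S \<and> (\<forall>x\<in>space S. 0 \<le> g x \<and> g x \<le> 1) \<longrightarrow>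
            CS f (law_D S M) c - lam * CS f (law_DP S M) cbar
              \<le> CS g (law_D S M) c - lam * CS g (law_DP S M) cbar)
        \<longleftrightarrow> (AE x in ?P. s x \<noteq> 0 \<longrightarrow> f x = (if s x > 0 then 1 else 0))"
    if "f \<in> borel_measurable S" "\<forall>x\<in>space S. 0 \<le> f x \<and> f x \<le> 1" for f
    using that by (simp add: risk marg_X_def cong: imp_cong)
  then show ?thesis
    unfolding s_def[symmetric] by blast
qed

end
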